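(* Let $\mathcal H$ be a regular hypergraph, $L=L_K(\mathcal H)$ and $E$ its underlying graph. The category $\mathfrak M_L$ of unital right $L$-modules is equivalent to the full subcategory of the category of quiver representations of $E$ consisting of those representations $\rho$ satisfying condition (H): for every $h\in\mathcal H^1$, the linear map $[\rho(h)]:\bigoplus_{i\in I_h}\rho(s(h)_i)\to\bigoplus_{j\in J_h}\rho(r(h)_j)$, $(x_i)_{i\in I_h}\mapsto\big(\sum_{i\in I_h}\rho(h_{ij})(x_i)\big)_{j\in J_h}$, is an isomorphism. Under this equivalence a module $M$ corresponds to the representation $\rho_M(v)=Mv$, $\rho_M(e)(m)=me$.
   Context: $K$ is a field. A hypergraph $\mathcal H=(\mathcal H^0,\mathcal H^1,s,r)$: vertex set $\mathcal H^0$, hyperedge set $\mathcal H^1$, and for each $h$ nonempty index sets $I_h,J_h$ with families $s(h)=(s(h)_i)_{i\in I_h}$, $r(h)=(r(h)_j)_{j\in J_h}$ of vertices; regular means all $I_h,J_h$ finite. $L_K(\mathcal H)$ is the $K$-algebra generated by $\{v,h_{ij},h_{ij}^*\}$ ($v\in\mathcal H^0$, $h\in\mathcal H^1$, $i\in I_h$, $j\in J_h$) subject to $uv=\delta_{u,v}u$; $s(h)_ih_{ij}=h_{ij}=h_{ij}r(h)_j$, $r(h)_jh_{ij}^*=h_{ij}^*=h_{ij}^*s(h)_i$; $\sum_{j}h_{ij}h_{kj}^*=\delta_{ik}s(h)_i$; $\sum_{i}h_{ij}^*h_{ik}=\delta_{jk}r(h)_j$. The underlying graph $E$ has $E^0=\mathcal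 H^0$, $E^1=\{h_{ij}\}$, $s(h_{ij})=s(h)_i$, $r(h_{ij})=r(h)_j$. A right $L$-module $M$ is unital if $M=\sum_{v\in\mathcal H^0}Mv$. A quiver representation $\rho$ of $E$ assigns a $K$-vector space $\rho(v)$ to each vertex and a linear map $\rho(e):\rho(s(e))\to\rho(r(e))$ to each edge; morphisms are families of linear maps $\phi_v:\rho(v)\to\rho'(v)$ with $\phi_{r(e)}\circ\rho(e)=\rho'(e)\circ\phi_{s(e)}$. *)

theory Defs
  imports Complex_Main "HOL-Library.Function_Algebras" "HOL-Library.FuncSet"
begin

definition regular_hypergraph ::
  "'v set \<Rightarrow> 'h set \<Rightarrow> ('h \<Rightarrow> 'i set) \<Rightarrow> ('h \<Rightarrow> 'j set)
   \<Rightarrow> ('h \<Rightarrow> 'i \<Rightarrow> 'v) \<Rightarrow> ('h \<Rightarrow> 'j \<Rightarrow> 'v) \<Rightarrow> bool" where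
  "regular_hypergraph H0 H1 I J s r \<longleftrightarrow>
     (\<forall>h\<in>H1. I h \<noteq> {} \<and> J h \<noteq> {} \<and> finite (I h) \<and> finite (J h) \<and>
             (\<forall>i\<in>I h. s h i \<in> H0) \<and> (\<forall>j\<in>J h. r h j \<in> H0))"

definition subsp :: "('k \<Rightarrow> 'b \<Rightarrow> 'b) \<Rightarrow> 'b::ab_group_add set \<Rightarrow> bool" where
  "subsp sc S \<longleftrightarrow> 0 \<in> S \<and> (\<forall>x\<in>S. \<forall>y\<in>S. x + y \<in> S) \<and> (\<forall>c. \<forall>x\<in>S. sc c x \<in> S)"

definition lin_on :: "('k \<Rightarrow> 'b \<Rightarrow> 'b) \<Rightarrow> ('k \<Rightarrow> 'c \<Rightarrow> 'c) \<Rightarrow> 'b::ab_group_add set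
     \<Rightarrow> 'c::ab_group_add set \<Rightarrow> ('b \<Rightarrow> 'c) \<Rightarrow> bool" where
  "lin_on sc1 sc2 A B f \<longleftrightarrow> f ` A \<subseteq> B \<and>
     (\<forall>x\<in>A. \<forall>y\<in>A. f (x + y) = f x + f y) \<and> (\<forall>c. \<forall>x\<in>A. f (sc1 c x) = sc2 c (f x))"

(* A unital right L_K(H)-module, given (via the defining presentation of L_K(H)) by a
   K-vector space M and the right actions of the generators:
     P v m = m v,  A h i j m = m h_ij,  As h i j m = m h_ij^*. *)
definition unital_module ::
  "('k::field \<Rightarrow> 'm::ab_group_add \<Rightarrow> 'm) \<Rightarrow> 'v set \<Rightarrow> 'h set \<Rightarrow> ('h \<Rightarrow> 'i set) \<Rightarrow> ('h \<Rightarrow> 'j set)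
   \<Rightarrow> ('h \<Rightarrow> 'i \<Rightarrow> 'v) \<Rightarrow> ('h \<Rightarrow> 'j \<Rightarrow> 'v)
   \<Rightarrow> 'm set \<Rightarrow> ('v \<Rightarrow> 'm \<Rightarrow> 'm) \<Rightarrow> ('h \<Rightarrow> 'i \<Rightarrow> 'j \<Rightarrow> 'm \<Rightarrow> 'm) \<Rightarrow> ('h \<Rightarrow> 'i \<Rightarrow> 'j \<Rightarrow> 'm \<Rightarrow> 'm)
   \<Rightarrow> bool" where
  "unital_module sc H0 H1 I J s r M P A As \<longleftrightarrow>
     Vector_Spaces.vector_space sc \<and> subsp sc M \<and>
     (\<forall>v\<in>H0. lin_on sc sc M M (P v)) \<and>
     (\<forall>h\<in>H1. \<forall>i\<in>I h. \<forall>j\<in>J h. lin_on sc sc M M (A h i j) \<and> lin_on sc sc M M (As h i j)) \<and>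
     \<comment> \<open>u v = delta_{u,v} u\<close>
     (\<forall>u\<in>H0. \<forall>v\<in>H0. \<forall>m\<in>M. P v (P u m) = (if u = v then P u m else 0)) \<and>
     \<comment> \<open>s(h)_i h_ij = h_ij = h_ij r(h)_j and r(h)_j h_ij^* = h_ij^* = h_ij^* s(h)_i\<close>
     (\<forall>h\<in>H1. \<forall>i\<in>I h. \<forall>j\<in>J h. \<forall>m\<in>M.
        A h i j (P (s h i) m) = A h i j m \<and> P (r h j) (A h i j m) = A h i j m \<and>
        As h i j (P (r h j) m) = As h i j m \<and> P (s h i) (As h i j m) = As h i j m) \<and>
     \<comment> \<open>sum_j h_ij h_kj^* = delta_{i,k} s(h)_i\<close>
     (\<forall>h\<in>H1. \<forall>i\<in>I h. \<forall>k\<in>I h. \<forall>m\<in>M.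
        (\<Sum>j\<in>J h. As h k j (A h i j m)) = (if i = k then P (s h i) m else 0)) \<and>
     \<comment> \<open>sum_i h_ij^* h_ik = delta_{j,k} r(h)_j\<close>
     (\<forall>h\<in>H1. \<forall>j\<in>J h. \<forall>k\<in>J h. \<forall>m\<in>M.
        (\<Sum>i\<in>I h. A h i k (As h i j m)) = (if j = k then P (r h j) m else 0)) \<and>
     \<comment> \<open>unital: M = sum_v M v\<close>
     (\<forall>m\<in>M. \<exists>F g. finite F \<and> F \<subseteq> H0 \<and> (\<forall>v\<in>F. g v \<in> M) \<and> m = (\<Sum>v\<in>F. P v (g v)))"

definition Lmodule_hom ::
  "('k::field \<Rightarrow> 'm::ab_group_add \<Rightarrow> 'm) \<Rightarrow> ('k \<Rightarrow> 'n::ab_group_add \<Rightarrow> 'n)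
   \<Rightarrow> 'v set \<Rightarrow> 'h set \<Rightarrow> ('h \<Rightarrow> 'i set) \<Rightarrow> ('h \<Rightarrow> 'j set)
   \<Rightarrow> 'm set \<Rightarrow> ('v \<Rightarrow> 'm \<Rightarrow> 'm) \<Rightarrow> ('h \<Rightarrow> 'i \<Rightarrow> 'j \<Rightarrow> 'm \<Rightarrow> 'm) \<Rightarrow> ('h \<Rightarrow> 'i \<Rightarrow> 'j \<Rightarrow> 'm \<Rightarrow> 'm)
   \<Rightarrow> 'n set \<Rightarrow> ('v \<Rightarrow> 'n \<Rightarrow> 'n) \<Rightarrow> ('h \<Rightarrow> 'i \<Rightarrow> 'j \<Rightarrow> 'n \<Rightarrow> 'n) \<Rightarrow> ('h \<Rightarrow> 'i \<Rightarrow> 'j \<Rightarrow> 'n \<Rightarrow> 'n)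
   \<Rightarrow> ('m \<Rightarrow> 'n) \<Rightarrow> bool" where
  "Lmodule_hom sc1 sc2 H0 H1 I J M P A As N Q B Bs f \<longleftrightarrow>
     lin_on sc1 sc2 M N f \<and>
     (\<forall>v\<in>H0. \<forall>m\<in>M. f (P v m) = Q v (f m)) \<and>
     (\<forall>h\<in>H1. \<forall>i\<in>I h. \<forall>j\<in>J h. \<forall>m\<in>M.
        f (A h i j m) = B h i j (f m) \<and> f (As h i j m) = Bs h i j (f m))"

(* Quiver representation of the underlying graph E (edges h_ij, source s h i, range r h j):
   spaces V v and linear maps R h i j : V (s h i) \<rightarrow> V (r h j). *)
definition quiver_rep ::
  "('k::field \<Rightarrow> 'b::ab_group_add \<Rightarrow> 'b) \<Rightarrow> 'v set \<Rightarrow> 'h set \<Rightarrow> ('h \<Rightarrow> 'i set) \<Rightarrow> ('h \<Rightarrow> 'j set)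
   \<Rightarrow> ('h \<Rightarrow> 'i \<Rightarrow> 'v) \<Rightarrow> ('h \<Rightarrow> 'j \<Rightarrow> 'v) \<Rightarrow> ('v \<Rightarrow> 'b set) \<Rightarrow> ('h \<Rightarrow> 'i \<Rightarrow> 'j \<Rightarrow> 'b \<Rightarrow> 'b) \<Rightarrow> bool" where
  "quiver_rep sc H0 H1 I J s r V R \<longleftrightarrow>
     Vector_Spaces.vector_space sc \<and> (\<forall>v\<in>H0. subsp sc (V v)) \<and>
     (\<forall>h\<in>H1. \<forall>i\<in>I h. \<forall>j\<in>J h. lin_on sc sc (V (s h i)) (V (r h j)) (R h i j))"

(* Condition (H): [rho(h)] : (+)_i V(s(h)_i) \<rightarrow> (+)_j V(r(h)_j) is an isomorphism
   (it is linear by construction, so this means bijective). *)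
definition condH ::
  "'h set \<Rightarrow> ('h \<Rightarrow> 'i set) \<Rightarrow> ('h \<Rightarrow> 'j set) \<Rightarrow> ('h \<Rightarrow> 'i \<Rightarrow> 'v) \<Rightarrow> ('h \<Rightarrow> 'j \<Rightarrow> 'v)
   \<Rightarrow> ('v \<Rightarrow> 'b::ab_group_add set) \<Rightarrow> ('h \<Rightarrow> 'i \<Rightarrow> 'j \<Rightarrow> 'b \<Rightarrow> 'b) \<Rightarrow> bool" where
  "condH H1 I J s r V R \<longleftrightarrow>
     (\<forall>h\<in>H1. bij_betw (\<lambda>x. restrict (\<lambda>j. \<Sum>i\<in>I h. R h i j (x i)) (J h))
                       (PiE (I h) (\<lambda>i. V (s h i))) (PiE (J h) (\<lambda>j. V (r h j))))"

definition rep_morph ::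
  "('k::field \<Rightarrow> 'b::ab_group_add \<Rightarrow> 'b) \<Rightarrow> ('k \<Rightarrow> 'c::ab_group_add \<Rightarrow> 'c)
   \<Rightarrow> 'v set \<Rightarrow> 'h set \<Rightarrow> ('h \<Rightarrow> 'i set) \<Rightarrow> ('h \<Rightarrow> 'j set)
   \<Rightarrow> ('h \<Rightarrow> 'i \<Rightarrow> 'v) \<Rightarrow> ('h \<Rightarrow> 'j \<Rightarrow> 'v)
   \<Rightarrow> ('v \<Rightarrow> 'b set) \<Rightarrow> ('h \<Rightarrow> 'i \<Rightarrow> 'j \<Rightarrow> 'b \<Rightarrow> 'b)
   \<Rightarrow> ('v \<Rightarrow> 'c set) \<Rightarrow> ('h \<Rightarrow> 'i \<Rightarrow> 'j \<Rightarrow> 'c \<Rightarrow> 'c) \<Rightarrow> ('v \<Rightarrow> 'b \<Rightarrow> 'c) \<Rightarrow> bool" where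
  "rep_morph sc1 sc2 H0 H1 I J s r V R W S \<phi> \<longleftrightarrow>
     (\<forall>v\<in>H0. lin_on sc1 sc2 (V v) (W v) (\<phi> v)) \<and>
     (\<forall>h\<in>H1. \<forall>i\<in>I h. \<forall>j\<in>J h. \<forall>x\<in>V (s h i).
        \<phi> (r h j) (R h i j x) = S h i j (\<phi> (s h i) x))"

definition reps_isomorphic ::
  "('k::field \<Rightarrow> 'b::ab_group_add \<Rightarrow> 'b) \<Rightarrow> ('k \<Rightarrow> 'c::ab_group_add \<Rightarrow> 'c)
   \<Rightarrow> 'v set \<Rightarrow> 'h set \<Rightarrow> ('h \<Rightarrow> 'i set) \<Rightarrow> ('h \<Rightarrow> 'j set)
   \<Rightarrow> ('h \<Rightarrow> 'i \<Rightarrow> 'v) \<Rightarrow> ('h \<Rightarrow> 'j \<Rightarrow> 'v)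
   \<Rightarrow> ('v \<Rightarrow> 'b set) \<Rightarrow> ('h \<Rightarrow> 'i \<Rightarrow> 'j \<Rightarrow> 'b \<Rightarrow> 'b)
   \<Rightarrow> ('v \<Rightarrow> 'c set) \<Rightarrow> ('h \<Rightarrow> 'i \<Rightarrow> 'j \<Rightarrow> 'c \<Rightarrow> 'c) \<Rightarrow> bool" where
  "reps_isomorphic sc1 sc2 H0 H1 I J s r V R W S \<longleftrightarrow>
     (\<exists>\<phi> \<psi>. rep_morph sc1 sc2 H0 H1 I J s r V R W S \<phi> \<and>
            rep_morph sc2 sc1 H0 H1 I J s r W S V R \<psi> \<and>
            (\<forall>v\<in>H0. (\<forall>x\<in>V v. \<psi> v (\<phi> v x) = x) \<and> (\<forall>y\<in>W v. \<phi> v (\<psi> v y) = y)))"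

end

theory Submission
  imports Defs
begin

(* A unital module M over L_K(H) is the direct sum of its vertex components M v. For every
   hyperedge h, the defining relations of L_K(H) say precisely that the matrix of the maps h_ij
   between these components is invertible, its inverse being the transpose of the matrix of the
   h_ij^*; hence [rho_M(h)] is bijective, which is condition (H). A family of linear maps between
   components that intertwines the matrices of the h_ij therefore also intertwines their
   inverses, so it extends additively to a module homomorphism; with the direct sum
   decomposition this gives fullness and faithfulness. Conversely, for a representation rho
   satisfying (H), inverting each matrix [rho(h)] provides the action of the h_ij^*, and the
   finitely supported sections of (rho(v))_v form a unital module whose representation is
   isomorphic to rho. *)

section \<open>Linear maps between subspaces\<close>

lemma sum_apply: "sum f A x = (\<Sum>a\<in>A. f a x)"
  for f :: "'a \<Rightarrow> 'v \<Rightarrow> 'b::comm_monoid_add"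
  by (induct A rule: infinite_finite_induct) auto

lemma subsp_zero: "subsp sc S \<Longrightarrow> 0 \<in> S"
  and subsp_add: "subsp sc S \<Longrightarrow> x \<in> S \<Longrightarrow> y \<in> S \<Longrightarrow> x + y \<in> S"
  and subsp_scale: "subsp sc S \<Longrightarrow> x \<in> S \<Longrightarrow> sc c x \<in> S"
  unfolding subsp_def by blast+

lemma subsp_sum: "subsp sc S \<Longrightarrow> (\<And>k. k \<in> F \<Longrightarrow> g k \<in> S) \<Longrightarrow> sum g F \<in> S"
  by (induct F rule: infinite_finite_induct) (auto simp: subsp_def)

lemma lin_on_mem: "lin_on sc1 sc2 S T f \<Longrightarrow> x \<in> S \<Longrightarrow> f x \<in> T"
  and lin_on_add: "lin_on sc1 sc2 S T f \<Longrightarrow> x \<in> S \<Longrightarrow> y \<in> S \<Longrightarrow> f (x + y) = f x + f y"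
  and lin_on_scale: "lin_on sc1 sc2 S T f \<Longrightarrow> x \<in> S \<Longrightarrow> f (sc1 c x) = sc2 c (f x)"
  unfolding lin_on_def by blast+

lemma lin_on_zero: "lin_on sc1 sc2 S T f \<Longrightarrow> subsp sc1 S \<Longrightarrow> f 0 = 0"
  by (metis add.right_neutral add_left_imp_eq lin_on_add subsp_zero)

lemma lin_on_sum:
  assumes f: "lin_on sc1 sc2 S T f" and S: "subsp sc1 S" and g: "\<And>k. k \<in> F \<Longrightarrow> g k \<in> S"
  shows "f (sum g F) = (\<Sum>k\<in>F. f (g k))"
  using g
proof (induct F rule: infinite_finite_induct)
  case (insert k F)
  then show ?case by (simp add: lin_on_add[OF f] subsp_sum[OF S])
qed (simp_all add: lin_on_zero[OF f S])

lemma subsp_image: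
  assumes f: "lin_on sc1 sc2 S T f" and S: "subsp sc1 S"
  shows "subsp sc2 (f ` S)"
  unfolding subsp_def
proof (intro conjI ballI allI)
  show "0 \<in> f ` S"
    using lin_on_zero[OF f S] subsp_zero[OF S] by (metis image_eqI)
next
  fix x y assume "x \<in> f ` S" "y \<in> f ` S"
  then obtain a b where "a \<in> S" "b \<in> S" "x = f a" "y = f b"
    by blast
  then show "x + y \<in> f ` S"
    by (metis image_eqI lin_on_add[OF f] subsp_add[OF S])
next
  fix c x assume "x \<in> f ` S"
  then obtain a where "a \<in> S" "x = f a"
    by blast
  then show "sc2 c x \<in> f ` S"
    by (metis image_eqI lin_on_scale[OF f] subsp_scale[OF S])
qed

lemma lin_on_subset:
  "lin_on sc1 sc2 S T f \<Longrightarrow> S' \<subseteq> S \<Longrightarrow> f ` S' \<subseteq> T' \<Longrightarrow> lin_on sc1 sc2 S' T' f"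
  unfolding lin_on_def by (meson subsetD)

section \<open>Matrices of linear maps\<close>

definition matrix_map ::
  "'i set \<Rightarrow> 'j set \<Rightarrow> ('i \<Rightarrow> 'j \<Rightarrow> 'b \<Rightarrow> 'c::comm_monoid_add) \<Rightarrow> ('i \<Rightarrow> 'b) \<Rightarrow> 'j \<Rightarrow> 'c" where
  "matrix_map I J R x = restrict (\<lambda>j. \<Sum>i\<in>I. R i j (x i)) J"

lemma condH_iff_bij_matrix_map:
  "condH H1 I J s r V R \<longleftrightarrow>
     (\<forall>h\<in>H1. bij_betw (matrix_map (I h) (J h) (R h))
                       (PiE (I h) (\<lambda>i. V (s h i))) (PiE (J h) (\<lambda>j. V (r h j))))"
  unfolding condH_def matrix_map_def[abs_def] ..

lemma matrix_map_PiE: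
  assumes "\<And>j. j \<in> J \<Longrightarrow> subsp sc (Y j)" and "\<And>i j. i \<in> I \<Longrightarrow> j \<in> J \<Longrightarrow> R i j ` X i \<subseteq> Y j"
    and "x \<in> PiE I X"
  shows "matrix_map I J R x \<in> PiE J Y"
  using assms by (auto simp: matrix_map_def PiE_iff image_subset_iff intro!: subsp_sum)

definition inverse_matrices ::
  "('k \<Rightarrow> 'b::ab_group_add \<Rightarrow> 'b) \<Rightarrow> 'i set \<Rightarrow> 'j set \<Rightarrow> ('i \<Rightarrow> 'b set) \<Rightarrow> ('j \<Rightarrow> 'b set)
   \<Rightarrow> ('i \<Rightarrow> 'j \<Rightarrow> 'b \<Rightarrow> 'b) \<Rightarrow> ('i \<Rightarrow> 'j \<Rightarrow> 'b \<Rightarrow> 'b) \<Rightarrow> bool" where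
  "inverse_matrices sc I J X Y R S \<longleftrightarrow>
     (\<forall>i\<in>I. \<forall>j\<in>J. lin_on sc sc (X i) (Y j) (R i j) \<and> lin_on sc sc (Y j) (X i) (S i j)) \<and>
     (\<forall>i\<in>I. \<forall>k\<in>I. \<forall>x\<in>X i. (\<Sum>j\<in>J. S k j (R i j x)) = (if i = k then x else 0)) \<and>
     (\<forall>j\<in>J. \<forall>l\<in>J. \<forall>y\<in>Y j. (\<Sum>i\<in>I. R i l (S i j y)) = (if j = l then y else 0))"

lemma inverse_matrices_linD:
  assumes "inverse_matrices sc I J X Y R S" "i \<in> I" "j \<in> J"
  shows "lin_on sc sc (X i) (Y j) (R i j)" "lin_on sc sc (Y j) (X i) (S i j)"
  using assms unfolding inverse_matrices_def by blast+

lemma inverse_matrices_left: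
  "inverse_matrices sc I J X Y R S \<Longrightarrow> i \<in> I \<Longrightarrow> k \<in> I \<Longrightarrow> x \<in> X i \<Longrightarrow>
     (\<Sum>j\<in>J. S k j (R i j x)) = (if i = k then x else 0)"
  and inverse_matrices_right:
  "inverse_matrices sc I J X Y R S \<Longrightarrow> j \<in> J \<Longrightarrow> l \<in> J \<Longrightarrow> y \<in> Y j \<Longrightarrow>
     (\<Sum>i\<in>I. R i l (S i j y)) = (if j = l then y else 0)"
  unfolding inverse_matrices_def by blast+

lemma inverse_matrices_transpose:
  "inverse_matrices sc I J X Y R S \<Longrightarrow> inverse_matrices sc J I Y X (\<lambda>j i. S i j) (\<lambda>j i. R i j)"
  unfolding inverse_matrices_def by blast

lemma inverse_matrices_left_inverse:
  assumes RS: "inverse_matrices sc I J X Y R S" and I: "finite I"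
    and Y: "\<And>j. j \<in> J \<Longrightarrow> subsp sc (Y j)" and x: "x \<in> PiE I X"
  shows "matrix_map J I (\<lambda>j i. S i j) (matrix_map I J R x) = x"
proof -
  have R: "R i j (x i) \<in> Y j" and S: "lin_on sc sc (Y j) (X i) (S i j)" if "i \<in> I" "j \<in> J" for i j
    using inverse_matrices_linD[OF RS that] PiE_mem[OF x that(1)] by (auto intro: lin_on_mem)
  have "(\<Sum>j\<in>J. S i j (\<Sum>k\<in>I. R k j (x k))) = x i" if i: "i \<in> I" for i
  proof -
    have "(\<Sum>j\<in>J. S i j (\<Sum>k\<in>I. R k j (x k))) = (\<Sum>j\<in>J. \<Sum>k\<in>I. S i j (R k j (x k)))"
      using i R by (intro sum.cong refl lin_on_sum[OF S Y]) auto
    also have "\<dots> = (\<Sum>k\<in>I. \<Sum>j\<in>J. S i j (R k j (x k)))"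
      by (rule sum.swap)
    also have "\<dots> = (\<Sum>k\<in>I. if k = i then x k else 0)"
      using inverse_matrices_left[OF RS _ i PiE_mem[OF x]] by (intro sum.cong refl) auto
    also have "\<dots> = x i"
      using I i by simp
    finally show ?thesis .
  qed
  then have "matrix_map J I (\<lambda>j i. S i j) (matrix_map I J R x) = restrict x I"
    unfolding matrix_map_def by (intro restrict_ext) simp
  with x show ?thesis
    by (simp add: PiE_restrict)
qed

lemma inverse_matrices_bij:
  assumes RS: "inverse_matrices sc I J X Y R S" and "finite I" "finite J"
    and "\<And>i. i \<in> I \<Longrightarrow> subsp sc (X i)" "\<And>j. j \<in> J \<Longrightarrow> subsp sc (Y j)"
  shows "bij_betw (matrix_map I J R) (PiE I X) (PiE J Y)"
proof (rule bij_betw_byWitness[where f' = "matrix_map J I (\<lambda>j i. S i j)"])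
  have R: "R i j ` X i \<subseteq> Y j" and S: "S i j ` Y j \<subseteq> X i" if "i \<in> I" "j \<in> J" for i j
    using inverse_matrices_linD[OF RS that] unfolding lin_on_def by auto
  show "\<forall>x\<in>PiE I X. matrix_map J I (\<lambda>j i. S i j) (matrix_map I J R x) = x"
    using inverse_matrices_left_inverse[OF RS] assms by blast
  show "\<forall>y\<in>PiE J Y. matrix_map I J R (matrix_map J I (\<lambda>j i. S i j) y) = y"
    using inverse_matrices_left_inverse[OF inverse_matrices_transpose[OF RS]] assms by simp
  show "matrix_map I J R ` PiE I X \<subseteq> PiE J Y"
    using matrix_map_PiE[of J sc Y I R X] assms R by blast
  show "matrix_map J I (\<lambda>j i. S i j) ` PiE J Y \<subseteq> PiE I X"
    using matrix_map_PiE[of I sc X J "\<lambda>j i. S i j" Y] assms S by blast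
qed


lemma inverse_matrices_intertwine:
  assumes RS: "inverse_matrices sc I J X Y R S" and RS': "inverse_matrices sc' I J X' Y' R' S'"
    and I: "finite I" and J: "finite J"
    and Y: "\<And>j. j \<in> J \<Longrightarrow> subsp sc (Y j)" and Y': "\<And>j. j \<in> J \<Longrightarrow> subsp sc' (Y' j)"
    and \<phi>: "\<And>i. i \<in> I \<Longrightarrow> lin_on sc sc' (X i) (X' i) (\<phi> i)"
    and \<psi>: "\<And>j. j \<in> J \<Longrightarrow> lin_on sc sc' (Y j) (Y' j) (\<psi> j)"
    and comm: "\<And>i j x. i \<in> I \<Longrightarrow> j \<in> J \<Longrightarrow> x \<in> X i \<Longrightarrow> \<psi> j (R i j x) = R' i j (\<phi> i x)"
    and i: "i \<in> I" and j: "j \<in> J" and y: "y \<in> Y j"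
  shows "\<phi> i (S i j y) = S' i j (\<psi> j y)"
proof -
  define z where "z k = \<phi> k (S k j y)" for k
  have z: "z k \<in> X' k" if "k \<in> I" for k
    unfolding z_def using that j y by (meson \<phi> inverse_matrices_linD(2)[OF RS] lin_on_mem)
  have R'z: "(\<Sum>k\<in>I. R' k l (z k)) = (if j = l then \<psi> j y else 0)" if l: "l \<in> J" for l
  proof -
    have S_y: "S k j y \<in> X k" if "k \<in> I" for k
      using that j y by (meson inverse_matrices_linD(2)[OF RS] lin_on_mem)
    have "(\<Sum>k\<in>I. R' k l (z k)) = (\<Sum>k\<in>I. \<psi> l (R k l (S k j y)))"
      unfolding z_def using comm[OF _ l S_y] by simp
    also have "\<dots> = \<psi> l (\<Sum>k\<in>I. R k l (S k j y))"
      using S_y l by (intro lin_on_sum[OF \<psi>[OF l] Y[OF l], symmetric])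
        (meson inverse_matrices_linD(1)[OF RS] lin_on_mem)
    also have "\<dots> = (if j = l then \<psi> j y else 0)"
      using inverse_matrices_right[OF RS j l y] lin_on_zero[OF \<psi>[OF l] Y[OF l]] by simp
    finally show ?thesis .
  qed
  have "\<phi> i (S i j y) = (\<Sum>k\<in>I. if k = i then z k else 0)"
    using I i by (simp add: z_def)
  also have "\<dots> = (\<Sum>k\<in>I. \<Sum>l\<in>J. S' i l (R' k l (z k)))"
    using inverse_matrices_left[OF RS' _ i z] by simp
  also have "\<dots> = (\<Sum>l\<in>J. S' i l (\<Sum>k\<in>I. R' k l (z k)))"
    unfolding sum.swap[of _ J]
    by (intro sum.cong refl lin_on_sum[OF inverse_matrices_linD(2)[OF RS' i] Y', symmetric])
      (meson z inverse_matrices_linD(1)[OF RS'] lin_on_mem)+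
  also have "\<dots> = (\<Sum>l\<in>J. if l = j then S' i j (\<psi> j y) else 0)"
    using R'z lin_on_zero[OF inverse_matrices_linD(2)[OF RS' i] Y'] by (intro sum.cong refl) auto
  also have "\<dots> = S' i j (\<psi> j y)"
    using J j by simp
  finally show ?thesis .
qed

definition inverse_matrix ::
  "'i set \<Rightarrow> 'j set \<Rightarrow> ('i \<Rightarrow> 'b set) \<Rightarrow> ('i \<Rightarrow> 'j \<Rightarrow> 'b \<Rightarrow> 'b::ab_group_add) \<Rightarrow> 'i \<Rightarrow> 'j \<Rightarrow> 'b \<Rightarrow> 'b"
  where "inverse_matrix I J X R i j y =
    the_inv_into (PiE I X) (matrix_map I J R) (restrict (\<lambda>l. if l = j then y else 0) J) i"

locale invertible_matrix =
  fixes sc :: "'k::field \<Rightarrow> 'b::ab_group_add \<Rightarrow> 'b" and I :: "'i set" and J :: "'j set"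
    and X :: "'i \<Rightarrow> 'b set" and Y :: "'j \<Rightarrow> 'b set" and R :: "'i \<Rightarrow> 'j \<Rightarrow> 'b \<Rightarrow> 'b"
  assumes vector_space: "Vector_Spaces.vector_space sc"
    and finite_I: "finite I" and finite_J: "finite J"
    and subsp_X: "i \<in> I \<Longrightarrow> subsp sc (X i)" and subsp_Y: "j \<in> J \<Longrightarrow> subsp sc (Y j)"
    and lin_R: "i \<in> I \<Longrightarrow> j \<in> J \<Longrightarrow> lin_on sc sc (X i) (Y j) (R i j)"
    and bij: "bij_betw (matrix_map I J R) (PiE I X) (PiE J Y)"
begin

abbreviation "T \<equiv> matrix_map I J R"
abbreviation "S \<equiv> inverse_matrix I J X R"

lemma R_mem: "i \<in> I \<Longrightarrow> j \<in> J \<Longrightarrow> x \<in> X i \<Longrightarrow> R i j x \<in> Y j"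
  using lin_R lin_on_mem by blast

(* Elements of PiE are undefined outside the index set, so sums and multiples of them have to be
   restricted again. *)
lemma matrix_map_add:
  assumes "x \<in> PiE I X" "x' \<in> PiE I X"
  shows "T (restrict (\<lambda>i. x i + x' i) I) = restrict (\<lambda>j. T x j + T x' j) J"
  unfolding matrix_map_def using assms
  by (intro restrict_ext) (auto simp: sum.distrib[symmetric] lin_on_add[OF lin_R] PiE_mem intro!: sum.cong)

lemma matrix_map_scale:
  assumes "x \<in> PiE I X"
  shows "T (restrict (\<lambda>i. sc c (x i)) I) = restrict (\<lambda>j. sc c (T x j)) J"
proof -
  interpret vector_space sc by (rule vector_space)
  show ?thesis
    unfolding matrix_map_def using assms
    by (intro restrict_ext) (auto simp: scale_sum_right lin_on_scale[OF lin_R] PiE_mem intro!: sum.cong)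
qed

lemma matrix_map_sum:
  assumes "\<And>k. k \<in> K \<Longrightarrow> x k \<in> PiE I X"
  shows "T (restrict (\<lambda>i. \<Sum>k\<in>K. x k i) I) = restrict (\<lambda>j. \<Sum>k\<in>K. T (x k) j) J"
  unfolding matrix_map_def
proof (intro restrict_ext)
  fix j assume j: "j \<in> J"
  have "(\<Sum>i\<in>I. R i j (\<Sum>k\<in>K. x k i)) = (\<Sum>i\<in>I. \<Sum>k\<in>K. R i j (x k i))"
    using assms j by (intro sum.cong refl lin_on_sum[OF lin_R subsp_X]) (auto simp: PiE_mem)
  with j show "(\<Sum>i\<in>I. R i j (restrict (\<lambda>i. \<Sum>k\<in>K. x k i) I i))
      = (\<Sum>k\<in>K. restrict (\<lambda>j. \<Sum>i\<in>I. R i j (x k i)) J j)"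
    by (simp add: sum.swap[of _ I])
qed

lemma single_entry_PiE: "j \<in> J \<Longrightarrow> y \<in> Y j \<Longrightarrow> restrict (\<lambda>l. if l = j then y else 0) J \<in> PiE J Y"
  using subsp_Y subsp_zero by fastforce

lemma inverse_matrix_column:
  assumes "j \<in> J" "y \<in> Y j"
  shows "restrict (\<lambda>i. S i j y) I \<in> PiE I X"
    and "T (restrict (\<lambda>i. S i j y) I) = restrict (\<lambda>l. if l = j then y else 0) J"
proof -
  have "the_inv_into (PiE I X) T (restrict (\<lambda>l. if l = j then y else 0) J) \<in> PiE I X"
    using bij single_entry_PiE[OF assms] by (metis bij_betw_def the_inv_into_into order_refl)
  moreover have "T (the_inv_into (PiE I X) T (restrict (\<lambda>l. if l = j then y else 0) J)) = restrict (\<lambda>l. if l = j then y else 0) J"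
    using bij single_entry_PiE[OF assms] by (metis bij_betw_def f_the_inv_into_f)
  ultimately show "restrict (\<lambda>i. S i j y) I \<in> PiE I X" "T (restrict (\<lambda>i. S i j y) I) = restrict (\<lambda>l. if l = j then y else 0) J"
    unfolding inverse_matrix_def by (simp_all add: PiE_restrict)
qed

lemma inverse_matrix_eqI:
  assumes "a \<in> PiE I X" "T a = restrict (\<lambda>l. if l = j then y else 0) J" "i \<in> I"
  shows "S i j y = a i"
  using assms bij unfolding inverse_matrix_def bij_betw_def by (simp add: the_inv_into_f_eq)

lemma inverse_matrix_mem: "i \<in> I \<Longrightarrow> j \<in> J \<Longrightarrow> y \<in> Y j \<Longrightarrow> S i j y \<in> X i"
  using inverse_matrix_column(1) by fastforce

lemma inverse_matrix_right:
  assumes "j \<in> J" "l \<in> J" "y \<in> Y j"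
  shows "(\<Sum>i\<in>I. R i l (S i j y)) = (if j = l then y else 0)"
  using arg_cong[OF inverse_matrix_column(2)[OF assms(1,3)], of "\<lambda>x. x l"] assms(2)
  by (auto simp: matrix_map_def)

lemma inverse_matrix_add:
  assumes i: "i \<in> I" and j: "j \<in> J" and y: "y \<in> Y j" "y' \<in> Y j"
  shows "S i j (y + y') = S i j y + S i j y'"
proof -
  have "S i j (y + y') = restrict (\<lambda>i. S i j y + S i j y') I i"
  proof (rule inverse_matrix_eqI[OF _ _ i])
    show "restrict (\<lambda>i. S i j y + S i j y') I \<in> PiE I X"
      using inverse_matrix_mem j y subsp_X subsp_add by fastforce
    have "T (restrict (\<lambda>i. S i j y + S i j y') I)
        = restrict (\<lambda>l. T (restrict (\<lambda>i. S i j y) I) l + T (restrict (\<lambda>i. S i j y') I) l) J"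
      using matrix_map_add[OF inverse_matrix_column(1)[OF j y(1)] inverse_matrix_column(1)[OF j y(2)]]
      by (simp cong: restrict_cong)
    also have "\<dots> = restrict (\<lambda>l. if l = j then y + y' else 0) J"
      by (intro restrict_ext) (auto simp: inverse_matrix_column(2)[OF j] y)
    finally show "T (restrict (\<lambda>i. S i j y + S i j y') I) = restrict (\<lambda>l. if l = j then y + y' else 0) J" .
  qed
  with i show ?thesis by simp
qed


lemma inverse_matrix_scale:
  assumes i: "i \<in> I" and j: "j \<in> J" and y: "y \<in> Y j"
  shows "S i j (sc c y) = sc c (S i j y)"
proof -
  interpret vector_space sc by (rule vector_space)
  have "S i j (sc c y) = restrict (\<lambda>i. sc c (S i j y)) I i"
  proof (rule inverse_matrix_eqI[OF _ _ i])
    show "restrict (\<lambda>i. sc c (S i j y)) I \<in> PiE I X"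
      using inverse_matrix_mem j y subsp_X subsp_scale by fastforce
    have "T (restrict (\<lambda>i. sc c (S i j y)) I) = restrict (\<lambda>l. sc c (T (restrict (\<lambda>i. S i j y) I) l)) J"
      using matrix_map_scale[OF inverse_matrix_column(1)[OF j y]] by (simp cong: restrict_cong)
    also have "\<dots> = restrict (\<lambda>l. if l = j then sc c y else 0) J"
      by (intro restrict_ext) (auto simp: inverse_matrix_column(2)[OF j] y)
    finally show "T (restrict (\<lambda>i. sc c (S i j y)) I) = restrict (\<lambda>l. if l = j then sc c y else 0) J" .
  qed
  with i show ?thesis by simp
qed

lemma lin_on_inverse_matrix: "i \<in> I \<Longrightarrow> j \<in> J \<Longrightarrow> lin_on sc sc (Y j) (X i) (S i j)"
  unfolding lin_on_def using inverse_matrix_mem inverse_matrix_add inverse_matrix_scale by blast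

lemma inverse_matrix_left:
  assumes i: "i \<in> I" and k: "k \<in> I" and x: "x \<in> X i"
  shows "(\<Sum>j\<in>J. S k j (R i j x)) = (if i = k then x else 0)"
proof -
  define a where "a = restrict (\<lambda>k. \<Sum>j\<in>J. S k j (R i j x)) I"
  define d where "d = restrict (\<lambda>k. if k = i then x else 0) I"
  have col: "restrict (\<lambda>k. S k j (R i j x)) I \<in> PiE I X" if "j \<in> J" for j
    using inverse_matrix_column(1) R_mem i x that by blast
  have a: "a \<in> PiE I X"
    unfolding a_def using R_mem i inverse_matrix_mem subsp_X x by (auto intro!: subsp_sum)
  have d: "d \<in> PiE I X"
    unfolding d_def using subsp_zero[OF subsp_X] x by auto
  have "T a = T d"
  proof -
    have "T a = restrict (\<lambda>l. \<Sum>j\<in>J. T (restrict (\<lambda>k. S k j (R i j x)) I) l) J"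
      unfolding a_def using matrix_map_sum[OF col] by (simp cong: restrict_cong)
    also have "\<dots> = restrict (\<lambda>l. R i l x) J"
      using finite_J by (intro restrict_ext) (simp add: inverse_matrix_column(2) R_mem i x)
    also have "\<dots> = T d"
      unfolding matrix_map_def d_def
    proof (intro restrict_ext)
      fix l assume l: "l \<in> J"
      have "(\<Sum>k\<in>I. R k l (restrict (\<lambda>k. if k = i then x else 0) I k))
          = (\<Sum>k\<in>I. if k = i then R i l x else 0)"
        using l lin_on_zero[OF lin_R subsp_X] by (intro sum.cong refl) auto
      with finite_I i show "R i l x = (\<Sum>k\<in>I. R k l (restrict (\<lambda>k. if k = i then x else 0) I k))"
        by simp
    qed
    finally show ?thesis .
  qed
  then have "a = d"
    using bij a d unfolding bij_betw_def by (meson inj_onD)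
  then have "a k = d k"
    by simp
  with k show ?thesis
    unfolding a_def d_def by simp
qed

lemma inverse_matrices_inverse_matrix: "inverse_matrices sc I J X Y R S"
  unfolding inverse_matrices_def
  by (simp add: lin_R lin_on_inverse_matrix inverse_matrix_left inverse_matrix_right)

end

section \<open>The representation of a unital module\<close>

locale hypergraph_module =
  fixes sc :: "'k::field \<Rightarrow> 'm::ab_group_add \<Rightarrow> 'm"
    and H0 :: "'v set" and H1 :: "'h set" and I :: "'h \<Rightarrow> 'i set" and J :: "'h \<Rightarrow> 'j set"
    and s :: "'h \<Rightarrow> 'i \<Rightarrow> 'v" and r :: "'h \<Rightarrow> 'j \<Rightarrow> 'v"
    and M :: "'m set" and P :: "'v \<Rightarrow> 'm \<Rightarrow> 'm" and A As :: "'h \<Rightarrow> 'i \<Rightarrow> 'j \<Rightarrow> 'm \<Rightarrow> 'm"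
  assumes module: "unital_module sc H0 H1 I J s r M P A As"
    and regular: "regular_hypergraph H0 H1 I J s r"
begin

lemma vector_space: "Vector_Spaces.vector_space sc"
  and subsp_M: "subsp sc M"
  and lin_P: "v \<in> H0 \<Longrightarrow> lin_on sc sc M M (P v)"
  and lin_A: "h \<in> H1 \<Longrightarrow> i \<in> I h \<Longrightarrow> j \<in> J h \<Longrightarrow> lin_on sc sc M M (A h i j)"
  and lin_As: "h \<in> H1 \<Longrightarrow> i \<in> I h \<Longrightarrow> j \<in> J h \<Longrightarrow> lin_on sc sc M M (As h i j)"
  and P_P: "u \<in> H0 \<Longrightarrow> v \<in> H0 \<Longrightarrow> m \<in> M \<Longrightarrow> P v (P u m) = (if u = v then P u m else 0)"
  and A_P: "h \<in> H1 \<Longrightarrow> i \<in> I h \<Longrightarrow> j \<in> J h \<Longrightarrow> m \<in> M \<Longrightarrow> A h i j (P (s h i) m) = A h i j m"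
  and P_A: "h \<in> H1 \<Longrightarrow> i \<in> I h \<Longrightarrow> j \<in> J h \<Longrightarrow> m \<in> M \<Longrightarrow> P (r h j) (A h i j m) = A h i j m"
  and As_P: "h \<in> H1 \<Longrightarrow> i \<in> I h \<Longrightarrow> j \<in> J h \<Longrightarrow> m \<in> M \<Longrightarrow> As h i j (P (r h j) m) = As h i j m"
  and P_As: "h \<in> H1 \<Longrightarrow> i \<in> I h \<Longrightarrow> j \<in> J h \<Longrightarrow> m \<in> M \<Longrightarrow> P (s h i) (As h i j m) = As h i j m"
  and sum_As_A: "h \<in> H1 \<Longrightarrow> i \<in> I h \<Longrightarrow> k \<in> I h \<Longrightarrow> m \<in> M \<Longrightarrow>
        (\<Sum>j\<in>J h. As h k j (A h i j m)) = (if i = k then P (s h i) m else 0)"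
  and sum_A_As: "h \<in> H1 \<Longrightarrow> j \<in> J h \<Longrightarrow> l \<in> J h \<Longrightarrow> m \<in> M \<Longrightarrow>
        (\<Sum>i\<in>I h. A h i l (As h i j m)) = (if j = l then P (r h j) m else 0)"
  and unital: "m \<in> M \<Longrightarrow> \<exists>F g. finite F \<and> F \<subseteq> H0 \<and> (\<forall>v\<in>F. g v \<in> M) \<and> m = (\<Sum>v\<in>F. P v (g v))"
  using module unfolding unital_module_def by (simp_all add: Ball_def)

lemma finite_I: "h \<in> H1 \<Longrightarrow> finite (I h)" and finite_J: "h \<in> H1 \<Longrightarrow> finite (J h)"
  and s_mem: "h \<in> H1 \<Longrightarrow> i \<in> I h \<Longrightarrow> s h i \<in> H0" and r_mem: "h \<in> H1 \<Longrightarrow> j \<in> J h \<Longrightarrow> r h j \<in> H0"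
  using regular unfolding regular_hypergraph_def by blast+

lemma P_mem: "v \<in> H0 \<Longrightarrow> m \<in> M \<Longrightarrow> P v m \<in> M"
  using lin_P lin_on_mem by blast

lemma component_subset: "v \<in> H0 \<Longrightarrow> P v ` M \<subseteq> M"
  using P_mem by blast

lemma subsp_component: "v \<in> H0 \<Longrightarrow> subsp sc (P v ` M)"
  using subsp_image[OF lin_P subsp_M] .

lemma P_component: "u \<in> H0 \<Longrightarrow> v \<in> H0 \<Longrightarrow> x \<in> P u ` M \<Longrightarrow> P v x = (if u = v then x else 0)"
  using P_P by blast

lemma P_idem: "v \<in> H0 \<Longrightarrow> x \<in> P v ` M \<Longrightarrow> P v x = x"
  using P_component[of v v x] by simp

lemma A_component:
  assumes "h \<in> H1" "i \<in> I h" "j \<in> J h" "m \<in> M"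
  shows "A h i j m \<in> P (r h j) ` M"
proof -
  have "P (r h j) (A h i j m) \<in> P (r h j) ` M"
    using lin_on_mem[OF lin_A[OF assms(1-3)] assms(4)] by (rule imageI)
  then show ?thesis
    by (simp only: P_A[OF assms])
qed

lemma As_component:
  assumes "h \<in> H1" "i \<in> I h" "j \<in> J h" "m \<in> M"
  shows "As h i j m \<in> P (s h i) ` M"
proof -
  have "P (s h i) (As h i j m) \<in> P (s h i) ` M"
    using lin_on_mem[OF lin_As[OF assms(1-3)] assms(4)] by (rule imageI)
  then show ?thesis
    by (simp only: P_As[OF assms])
qed

lemma inverse_matrices_edge:
  assumes h: "h \<in> H1"
  shows "inverse_matrices sc (I h) (J h) (\<lambda>i. P (s h i) ` M) (\<lambda>j. P (r h j) ` M) (A h) (As h)"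
  unfolding inverse_matrices_def
proof (intro conjI ballI)
  fix i j assume i: "i \<in> I h" and j: "j \<in> J h"
  show "lin_on sc sc (P (s h i) ` M) (P (r h j) ` M) (A h i j)"
    using component_subset[OF s_mem[OF h i]] A_component[OF h i j]
    by (intro lin_on_subset[OF lin_A[OF h i j]]) auto
  show "lin_on sc sc (P (r h j) ` M) (P (s h i) ` M) (As h i j)"
    using component_subset[OF r_mem[OF h j]] As_component[OF h i j]
    by (intro lin_on_subset[OF lin_As[OF h i j]]) auto
next
  fix i k x assume i: "i \<in> I h" and k: "k \<in> I h" and x: "x \<in> P (s h i) ` M"
  have "x \<in> M"
    by (rule subsetD[OF component_subset[OF s_mem[OF h i]] x])
  then show "(\<Sum>j\<in>J h. As h k j (A h i j x)) = (if i = k then x else 0)"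
    by (simp only: sum_As_A[OF h i k] P_idem[OF s_mem[OF h i] x])
next
  fix j l y assume j: "j \<in> J h" and l: "l \<in> J h" and y: "y \<in> P (r h j) ` M"
  have "y \<in> M"
    by (rule subsetD[OF component_subset[OF r_mem[OF h j]] y])
  then show "(\<Sum>i\<in>I h. A h i l (As h i j y)) = (if j = l then y else 0)"
    by (simp only: sum_A_As[OF h j l] P_idem[OF r_mem[OF h j] y])
qed

lemma quiver_rep_components: "quiver_rep sc H0 H1 I J s r (\<lambda>v. P v ` M) A"
  unfolding quiver_rep_def
  by (intro conjI ballI vector_space subsp_component inverse_matrices_linD(1)[OF inverse_matrices_edge])

lemma condH_components: "condH H1 I J s r (\<lambda>v. P v ` M) A"
  unfolding condH_iff_bij_matrix_map
  by (intro ballI inverse_matrices_bij[OF inverse_matrices_edge])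
    (simp_all add: finite_I finite_J subsp_component s_mem r_mem)

definition support :: "'m \<Rightarrow> 'v set" where "support m = {v\<in>H0. P v m \<noteq> 0}"

lemma finite_support: "m \<in> M \<Longrightarrow> finite (support m)"
  and sum_support: "m \<in> M \<Longrightarrow> m = (\<Sum>v\<in>support m. P v m)"
proof -
  assume m: "m \<in> M"
  then obtain F g where F: "finite F" "F \<subseteq> H0" "\<And>v. v \<in> F \<Longrightarrow> g v \<in> M"
    and m_eq: "m = (\<Sum>v\<in>F. P v (g v))"
    using unital by blast
  have P_m: "P u m = (if u \<in> F then P u (g u) else 0)" if u: "u \<in> H0" for u
  proof -
    have "P u m = (\<Sum>v\<in>F. P u (P v (g v)))"
      unfolding m_eq using F P_mem by (intro lin_on_sum[OF lin_P[OF u] subsp_M]) auto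
    also have "\<dots> = (\<Sum>v\<in>F. if v = u then P u (g u) else 0)"
      using F P_P u by (intro sum.cong) auto
    finally show ?thesis
      using F(1) by simp
  qed
  then have support_F: "support m \<subseteq> F"
    unfolding support_def by (auto split: if_splits)
  with F(1) show "finite (support m)"
    by (rule finite_subset[rotated])
  have "(\<Sum>v\<in>F. P v (g v)) = (\<Sum>v\<in>F. P v m)"
    using F(2) P_m by (intro sum.cong) auto
  with m_eq have "m = (\<Sum>v\<in>F. P v m)"
    by simp
  also have "\<dots> = (\<Sum>v\<in>support m. P v m)"
    using F support_F by (intro sum.mono_neutral_right) (auto simp: support_def)
  finally show "m = (\<Sum>v\<in>support m. P v m)" .
qed

lemma components_eqI:
  assumes "m \<in> M" "m' \<in> M" "\<And>v. v \<in> H0 \<Longrightarrow> P v m = P v m'"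
  shows "m = m'"
proof -
  have "support m = support m'"
    using assms(3) unfolding support_def by auto
  have "m = (\<Sum>v\<in>support m. P v m)"
    using assms(1) by (rule sum_support)
  also have "\<dots> = (\<Sum>v\<in>support m'. P v m')"
    using \<open>support m = support m'\<close> assms(3) by (intro sum.cong) (auto simp: support_def)
  also have "\<dots> = m'"
    using assms(2) by (rule sum_support[symmetric])
  finally show ?thesis .
qed

lemma lin_on_eq_on_components:
  assumes f: "lin_on sc sc' M N f" and g: "lin_on sc sc' M N g"
    and eq: "\<And>v x. v \<in> H0 \<Longrightarrow> x \<in> P v ` M \<Longrightarrow> f x = g x" and m: "m \<in> M"
  shows "f m = g m"
proof -
  have P_m: "\<And>v. v \<in> support m \<Longrightarrow> P v m \<in> M"
    using P_mem m by (simp add: support_def)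
  have "f m = (\<Sum>v\<in>support m. f (P v m))"
    by (subst sum_support[OF m]) (rule lin_on_sum[OF f subsp_M P_m])
  also have "\<dots> = (\<Sum>v\<in>support m. g (P v m))"
    using eq m by (intro sum.cong) (auto simp: support_def)
  also have "\<dots> = g m"
    by (subst (2) sum_support[OF m]) (rule lin_on_sum[OF g subsp_M P_m, symmetric])
  finally show ?thesis .
qed

lemma rep_morph_Lmodule_hom:
  assumes "Lmodule_hom sc sc' H0 H1 I J M P A As N Q B Bs f"
  shows "rep_morph sc sc' H0 H1 I J s r (\<lambda>v. P v ` M) A (\<lambda>v. Q v ` N) B (\<lambda>v. f)"
proof -
  have f: "lin_on sc sc' M N f"
    and f_P: "\<And>v m. v \<in> H0 \<Longrightarrow> m \<in> M \<Longrightarrow> f (P v m) = Q v (f m)"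
    and f_A: "\<And>h i j m. h \<in> H1 \<Longrightarrow> i \<in> I h \<Longrightarrow> j \<in> J h \<Longrightarrow> m \<in> M \<Longrightarrow> f (A h i j m) = B h i j (f m)"
    using assms unfolding Lmodule_hom_def by auto
  have "lin_on sc sc' (P v ` M) (Q v ` N) f" if v: "v \<in> H0" for v
    using f_P[OF v] lin_on_mem[OF f] by (intro lin_on_subset[OF f component_subset[OF v]]) auto
  moreover have "f (A h i j x) = B h i j (f x)"
    if "h \<in> H1" "i \<in> I h" "j \<in> J h" "x \<in> P (s h i) ` M" for h i j x
    using f_A[OF that(1-3)] that(4) component_subset[OF s_mem[OF that(1,2)]] by blast
  ultimately show ?thesis
    unfolding rep_morph_def by blast
qed

end

section \<open>Morphisms of modules and of representations\<close>

locale module_rep_morph =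
  M: hypergraph_module scM H0 H1 I J s r M P A As + N: hypergraph_module scN H0 H1 I J s r N Q B Bs
  for scM :: "'k::field \<Rightarrow> 'm::ab_group_add \<Rightarrow> 'm" and scN :: "'k \<Rightarrow> 'n::ab_group_add \<Rightarrow> 'n"
    and H0 :: "'v set" and H1 :: "'h set" and I :: "'h \<Rightarrow> 'i set" and J :: "'h \<Rightarrow> 'j set"
    and s :: "'h \<Rightarrow> 'i \<Rightarrow> 'v" and r :: "'h \<Rightarrow> 'j \<Rightarrow> 'v"
    and M P A As N Q B Bs +
  fixes \<phi> :: "'v \<Rightarrow> 'm \<Rightarrow> 'n"
  assumes rep_morph: "rep_morph scM scN H0 H1 I J s r (\<lambda>v. P v ` M) A (\<lambda>v. Q v ` N) B \<phi>"
begin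

lemma lin_\<phi>: "v \<in> H0 \<Longrightarrow> lin_on scM scN (P v ` M) (Q v ` N) (\<phi> v)"
  using rep_morph unfolding rep_morph_def by blast

lemma \<phi>_A: "h \<in> H1 \<Longrightarrow> i \<in> I h \<Longrightarrow> j \<in> J h \<Longrightarrow> x \<in> P (s h i) ` M \<Longrightarrow>
    \<phi> (r h j) (A h i j x) = B h i j (\<phi> (s h i) x)"
  using rep_morph unfolding rep_morph_def by blast

lemma \<phi>_mem: "v \<in> H0 \<Longrightarrow> x \<in> P v ` M \<Longrightarrow> \<phi> v x \<in> Q v ` N"
  by (rule lin_on_mem[OF lin_\<phi>])

lemma \<phi>_P_mem: "v \<in> H0 \<Longrightarrow> m \<in> M \<Longrightarrow> \<phi> v (P v m) \<in> N"
  using subsetD[OF N.component_subset \<phi>_mem] by blast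

lemma \<phi>_zero: "v \<in> H0 \<Longrightarrow> \<phi> v 0 = 0"
  using lin_on_zero[OF lin_\<phi> M.subsp_component] .

(* As h is inverse to A h, so a family intertwining the A h i j also intertwines the As h i j. *)
lemma \<phi>_As:
  assumes h: "h \<in> H1" and i: "i \<in> I h" and j: "j \<in> J h" and y: "y \<in> P (r h j) ` M"
  shows "\<phi> (s h i) (As h i j y) = Bs h i j (\<phi> (r h j) y)"
proof -
  have Y: "subsp scM (P (r h l) ` M)" "subsp scN (Q (r h l) ` N)"
    and \<psi>: "lin_on scM scN (P (r h l) ` M) (Q (r h l) ` N) (\<phi> (r h l))" if "l \<in> J h" for l
    using M.subsp_component N.subsp_component lin_\<phi> M.r_mem[OF h that] by blast+
  have \<phi>': "lin_on scM scN (P (s h k) ` M) (Q (s h k) ` N) (\<phi> (s h k))" if "k \<in> I h" for k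
    using lin_\<phi> M.s_mem[OF h that] by blast
  show ?thesis
    by (rule inverse_matrices_intertwine[where \<phi> = "\<lambda>i. \<phi> (s h i)" and \<psi> = "\<lambda>j. \<phi> (r h j)",
        OF M.inverse_matrices_edge[OF h] N.inverse_matrices_edge[OF h] M.finite_I[OF h] M.finite_J[OF h]
        Y \<phi>' \<psi> \<phi>_A[OF h] i j y])
qed

definition extension :: "'m \<Rightarrow> 'n" where
  "extension m = (\<Sum>v\<in>M.support m. \<phi> v (P v m))"

lemma extension_mem: "m \<in> M \<Longrightarrow> extension m \<in> N"
  unfolding extension_def
  by (rule subsp_sum[OF N.subsp_M]) (simp add: \<phi>_P_mem M.support_def)

lemma component_extension:
  assumes w: "w \<in> H0" and m: "m \<in> M"
  shows "Q w (extension m) = \<phi> w (P w m)"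
proof -
  have "Q w (extension m) = (\<Sum>v\<in>M.support m. Q w (\<phi> v (P v m)))"
    unfolding extension_def using \<phi>_P_mem m
    by (intro lin_on_sum[OF N.lin_P[OF w] N.subsp_M]) (simp add: M.support_def)
  also have "\<dots> = (\<Sum>v\<in>M.support m. if v = w then \<phi> w (P w m) else 0)"
    using N.P_component[OF _ w \<phi>_mem] m by (intro sum.cong refl) (auto simp: M.support_def)
  also have "\<dots> = \<phi> w (P w m)"
    using M.finite_support[OF m] \<phi>_zero[OF w] w by (auto simp: M.support_def)
  finally show ?thesis .
qed

lemma extension_eqI:
  assumes "m \<in> M" "y \<in> N" "\<And>w. w \<in> H0 \<Longrightarrow> Q w y = \<phi> w (P w m)"
  shows "extension m = y"
  using assms by (auto intro!: N.components_eqI[OF extension_mem] simp: component_extension)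

lemma extension_component:
  assumes v: "v \<in> H0" and x: "x \<in> P v ` M"
  shows "extension x = \<phi> v x"
proof (rule extension_eqI)
  show "x \<in> M"
    by (rule subsetD[OF M.component_subset[OF v] x])
  show "\<phi> v x \<in> N"
    by (rule subsetD[OF N.component_subset[OF v] \<phi>_mem[OF v x]])
  fix w assume w: "w \<in> H0"
  have "Q w (\<phi> v x) = (if v = w then \<phi> v x else 0)"
    by (rule N.P_component[OF v w \<phi>_mem[OF v x]])
  moreover have "P w x = (if v = w then x else 0)"
    by (rule M.P_component[OF v w x])
  ultimately show "Q w (\<phi> v x) = \<phi> w (P w x)"
    using \<phi>_zero[OF w] by (cases "v = w") simp_all
qed

lemma lin_on_extension: "lin_on scM scN M N extension"
  unfolding lin_on_def
proof (intro conjI ballI allI)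
  show "extension ` M \<subseteq> N"
    using extension_mem by blast
next
  fix x y assume x: "x \<in> M" and y: "y \<in> M"
  show "extension (x + y) = extension x + extension y"
  proof (rule extension_eqI)
    show "x + y \<in> M" "extension x + extension y \<in> N"
      using subsp_add[OF M.subsp_M x y] subsp_add[OF N.subsp_M extension_mem[OF x] extension_mem[OF y]] .
    fix w assume w: "w \<in> H0"
    have "Q w (extension x + extension y) = Q w (extension x) + Q w (extension y)"
      by (rule lin_on_add[OF N.lin_P[OF w] extension_mem[OF x] extension_mem[OF y]])
    also have "\<dots> = \<phi> w (P w x + P w y)"
      using lin_on_add[OF lin_\<phi>[OF w] imageI[OF x] imageI[OF y]] component_extension w x y by simp
    also have "\<dots> = \<phi> w (P w (x + y))"
      using lin_on_add[OF M.lin_P[OF w] x y] by simp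
    finally show "Q w (extension x + extension y) = \<phi> w (P w (x + y))" .
  qed
next
  fix c x assume x: "x \<in> M"
  show "extension (scM c x) = scN c (extension x)"
  proof (rule extension_eqI)
    show "scM c x \<in> M" "scN c (extension x) \<in> N"
      using subsp_scale[OF M.subsp_M x] subsp_scale[OF N.subsp_M extension_mem[OF x]] .
    fix w assume w: "w \<in> H0"
    have "Q w (scN c (extension x)) = scN c (\<phi> w (P w x))"
      using lin_on_scale[OF N.lin_P[OF w] extension_mem[OF x]] component_extension[OF w x] by simp
    also have "\<dots> = \<phi> w (P w (scM c x))"
      using lin_on_scale[OF lin_\<phi>[OF w] imageI[OF x]] lin_on_scale[OF M.lin_P[OF w] x] by simp
    finally show "Q w (scN c (extension x)) = \<phi> w (P w (scM c x))" .
  qed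
qed

lemma Lmodule_hom_extension: "Lmodule_hom scM scN H0 H1 I J M P A As N Q B Bs extension"
  unfolding Lmodule_hom_def
proof (intro conjI ballI lin_on_extension)
  fix v m assume v: "v \<in> H0" and m: "m \<in> M"
  show "extension (P v m) = Q v (extension m)"
    using extension_component[OF v] component_extension[OF v m] m by simp
next
  fix h i j m assume h: "h \<in> H1" and i: "i \<in> I h" and j: "j \<in> J h" and m: "m \<in> M"
  have si: "s h i \<in> H0" and rj: "r h j \<in> H0"
    using M.s_mem[OF h i] M.r_mem[OF h j] .
  have "extension (A h i j m) = \<phi> (r h j) (A h i j (P (s h i) m))"
    using extension_component[OF rj M.A_component[OF h i j m]] M.A_P[OF h i j m] by simp
  also have "\<dots> = B h i j (Q (s h i) (extension m))"
    using \<phi>_A[OF h i j] component_extension[OF si m] m by simp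
  also have "\<dots> = B h i j (extension m)"
    using N.A_P[OF h i j extension_mem[OF m]] .
  finally show "extension (A h i j m) = B h i j (extension m)" .
  have "extension (As h i j m) = \<phi> (s h i) (As h i j (P (r h j) m))"
    using extension_component[OF si M.As_component[OF h i j m]] M.As_P[OF h i j m] by simp
  also have "\<dots> = Bs h i j (Q (r h j) (extension m))"
    using \<phi>_As[OF h i j] component_extension[OF rj m] m by simp
  also have "\<dots> = Bs h i j (extension m)"
    using N.As_P[OF h i j extension_mem[OF m]] .
  finally show "extension (As h i j m) = Bs h i j (extension m)" .
qed

end

section \<open>The module of a representation satisfying (H)\<close>

definition direct_sum :: "'v set \<Rightarrow> ('v \<Rightarrow> 'b::zero set) \<Rightarrow> ('v \<Rightarrow> 'b) set" where
  "direct_sum H0 V = {x. (\<forall>v\<in>H0. x v \<in> V v) \<and> (\<forall>v. v \<notin> H0 \<longrightarrow> x v = 0) \<and> finite {v. x v \<noteq> 0}}"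

definition transport :: "'v \<Rightarrow> 'v \<Rightarrow> ('b \<Rightarrow> 'b) \<Rightarrow> ('v \<Rightarrow> 'b) \<Rightarrow> 'v \<Rightarrow> 'b::zero" where
  "transport u w f x = (\<lambda>v. if v = w then f (x u) else 0)"

lemma vector_space_pointwise:
  fixes sc :: "'k::field \<Rightarrow> 'b::ab_group_add \<Rightarrow> 'b"
  assumes "Vector_Spaces.vector_space sc"
  shows "Vector_Spaces.vector_space (\<lambda>c (x :: 'v \<Rightarrow> 'b) w. sc c (x w))"
proof -
  interpret vector_space sc by (rule assms)
  show ?thesis
    by unfold_locales (simp_all add: fun_eq_iff scale_right_distrib scale_left_distrib)
qed

lemma sum_transport: "(\<Sum>k\<in>K. transport u w (f k) x) = transport u w (\<lambda>y. \<Sum>k\<in>K. f k y) x"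
  by (rule ext) (simp add: sum_apply transport_def)

lemma transport_transport:
  "transport u w f (transport u' w' g x) = (if w' = u then transport u' w (\<lambda>y. f (g y)) x else transport u w f 0)"
  by (simp add: transport_def fun_eq_iff)

lemma direct_sum_apply: "x \<in> direct_sum H0 V \<Longrightarrow> v \<in> H0 \<Longrightarrow> x v \<in> V v"
  unfolding direct_sum_def by blast

lemma sum_transport_inverse_matrices:
  assumes RS: "inverse_matrices sc I J X Y R S" and i: "i \<in> I" and k: "k \<in> I" and x: "x (u i) \<in> X i"
  shows "(\<Sum>j\<in>J. transport (w j) (u k) (S k j) (transport (u i) (w j) (R i j) x))
    = (if i = k then transport (u i) (u i) id x else 0)"
proof -
  have "(\<Sum>j\<in>J. transport (w j) (u k) (S k j) (transport (u i) (w j) (R i j) x))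
      = transport (u i) (u k) (\<lambda>y. \<Sum>j\<in>J. S k j (R i j y)) x"
    by (simp add: transport_transport sum_transport)
  also have "\<dots> = (if i = k then transport (u i) (u i) id x else 0)"
    using inverse_matrices_left[OF RS i k x] by (cases "i = k") (simp_all add: transport_def fun_eq_iff)
  finally show ?thesis .
qed

context
  fixes sc :: "'k::field \<Rightarrow> 'b::ab_group_add \<Rightarrow> 'b" and H0 :: "'v set" and V :: "'v \<Rightarrow> 'b set"
  assumes vector_space: "Vector_Spaces.vector_space sc"
    and subsp_V: "\<And>v. v \<in> H0 \<Longrightarrow> subsp sc (V v)"
begin

lemma scale_zero: "sc c 0 = 0"
proof -
  interpret vector_space sc by (rule vector_space)
  show ?thesis by (rule scale_zero_right)
qed

lemma single_mem_direct_sum: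
  assumes "w \<in> H0" "y \<in> V w"
  shows "(\<lambda>v. if v = w then y else 0) \<in> direct_sum H0 V"
proof -
  have "{v. (if v = w then y else 0) \<noteq> 0} \<subseteq> {w}"
    by auto
  then show ?thesis
    unfolding direct_sum_def using assms subsp_zero[OF subsp_V] by (auto intro: finite_subset)
qed

lemma subsp_direct_sum: "subsp (\<lambda>c x w. sc c (x w)) (direct_sum H0 V)"
  unfolding subsp_def
proof (intro conjI ballI allI)
  show "0 \<in> direct_sum H0 V"
    unfolding direct_sum_def using subsp_zero[OF subsp_V] by simp
next
  fix x y assume x: "x \<in> direct_sum H0 V" and y: "y \<in> direct_sum H0 V"
  have "{v. x v + y v \<noteq> 0} \<subseteq> {v. x v \<noteq> 0} \<union> {v. y v \<noteq> 0}"
    by auto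
  with x y show "x + y \<in> direct_sum H0 V"
    unfolding direct_sum_def using subsp_add[OF subsp_V] by (auto intro: finite_subset)
next
  fix c x assume x: "x \<in> direct_sum H0 V"
  have "{v. sc c (x v) \<noteq> 0} \<subseteq> {v. x v \<noteq> 0}"
    using scale_zero by auto
  with x show "(\<lambda>w. sc c (x w)) \<in> direct_sum H0 V"
    unfolding direct_sum_def using subsp_scale[OF subsp_V] scale_zero by (auto intro: finite_subset)
qed

lemma lin_on_transport:
  assumes u: "u \<in> H0" and w: "w \<in> H0" and f: "lin_on sc sc (V u) (V w) f"
  shows "lin_on (\<lambda>c x v. sc c (x v)) (\<lambda>c x v. sc c (x v)) (direct_sum H0 V) (direct_sum H0 V) (transport u w f)"
proof -
  have x_u: "x u \<in> V u" if "x \<in> direct_sum H0 V" for x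
    using that u unfolding direct_sum_def by blast
  show ?thesis
    unfolding lin_on_def
  proof (intro conjI ballI allI)
  show "transport u w f ` direct_sum H0 V \<subseteq> direct_sum H0 V"
    unfolding transport_def using single_mem_direct_sum[OF w] lin_on_mem[OF f] x_u by blast
  fix x y assume "x \<in> direct_sum H0 V" "y \<in> direct_sum H0 V"
  then show "transport u w f (x + y) = transport u w f x + transport u w f y"
    using lin_on_add[OF f] x_u by (simp add: transport_def fun_eq_iff)
next
  fix c x assume "x \<in> direct_sum H0 V"
  then show "transport u w f (\<lambda>v. sc c (x v)) = (\<lambda>v. sc c (transport u w f x v))"
    using lin_on_scale[OF f] x_u scale_zero by (simp add: transport_def fun_eq_iff)
qed
qed

lemma sum_transport_direct_sum:
  assumes "x \<in> direct_sum H0 V"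
  shows "x = (\<Sum>v\<in>{v. x v \<noteq> 0}. transport v v id x)"
proof (rule ext)
  fix w
  have "finite {v. x v \<noteq> 0}"
    using assms unfolding direct_sum_def by blast
  then show "x w = (\<Sum>v\<in>{v. x v \<noteq> 0}. transport v v id x) w"
    by (simp add: sum_apply transport_def)
qed

lemma unital_module_direct_sum:
  assumes regular: "regular_hypergraph H0 H1 I J s r"
    and inverse: "\<And>h. h \<in> H1 \<Longrightarrow> inverse_matrices sc (I h) (J h) (\<lambda>i. V (s h i)) (\<lambda>j. V (r h j)) (R h) (S h)"
  shows "unital_module (\<lambda>c x w. sc c (x w)) H0 H1 I J s r (direct_sum H0 V) (\<lambda>v. transport v v id)
           (\<lambda>h i j. transport (s h i) (r h j) (R h i j)) (\<lambda>h i j. transport (r h j) (s h i) (S h i j))"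
  unfolding unital_module_def
proof (intro conjI ballI)
  have s_mem: "s h i \<in> H0" if "h \<in> H1" "i \<in> I h" for h i
    using regular that unfolding regular_hypergraph_def by blast
  have r_mem: "r h j \<in> H0" if "h \<in> H1" "j \<in> J h" for h j
    using regular that unfolding regular_hypergraph_def by blast
  show "Vector_Spaces.vector_space (\<lambda>c (x :: 'v \<Rightarrow> 'b) w. sc c (x w))"
    by (rule vector_space_pointwise[OF vector_space])
  show "subsp (\<lambda>c x w. sc c (x w)) (direct_sum H0 V)"
    by (rule subsp_direct_sum)
  fix h assume h: "h \<in> H1"
  {
    fix i j assume i: "i \<in> I h" and j: "j \<in> J h"
    show "lin_on (\<lambda>c x w. sc c (x w)) (\<lambda>c x w. sc c (x w)) (direct_sum H0 V) (direct_sum H0 V)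
        (transport (s h i) (r h j) (R h i j))"
      by (rule lin_on_transport[OF s_mem[OF h i] r_mem[OF h j] inverse_matrices_linD(1)[OF inverse[OF h] i j]])
    show "lin_on (\<lambda>c x w. sc c (x w)) (\<lambda>c x w. sc c (x w)) (direct_sum H0 V) (direct_sum H0 V)
        (transport (r h j) (s h i) (S h i j))"
      by (rule lin_on_transport[OF r_mem[OF h j] s_mem[OF h i] inverse_matrices_linD(2)[OF inverse[OF h] i j]])
  }
  show "(\<Sum>j\<in>J h. transport (r h j) (s h k) (S h k j) (transport (s h i) (r h j) (R h i j) x))
      = (if i = k then transport (s h i) (s h i) id x else 0)"
    if "i \<in> I h" "k \<in> I h" "x \<in> direct_sum H0 V" for i k x
    by (rule sum_transport_inverse_matrices[OF inverse[OF h] that(1,2)])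
      (rule direct_sum_apply[OF that(3) s_mem[OF h that(1)]])
  show "(\<Sum>i\<in>I h. transport (s h i) (r h l) (R h i l) (transport (r h j) (s h i) (S h i j) x))
      = (if j = l then transport (r h j) (r h j) id x else 0)"
    if "j \<in> J h" "l \<in> J h" "x \<in> direct_sum H0 V" for j l x
    by (rule sum_transport_inverse_matrices[OF inverse_matrices_transpose[OF inverse[OF h]] that(1,2)])
      (rule direct_sum_apply[OF that(3) r_mem[OF h that(1)]])
next
  fix v assume v: "v \<in> H0"
  show "lin_on (\<lambda>c x w. sc c (x w)) (\<lambda>c x w. sc c (x w)) (direct_sum H0 V) (direct_sum H0 V) (transport v v id)"
    by (rule lin_on_transport[OF v v]) (simp add: lin_on_def)
next
  fix x assume x: "x \<in> direct_sum H0 V"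
  show "\<exists>F g. finite F \<and> F \<subseteq> H0 \<and> (\<forall>v\<in>F. g v \<in> direct_sum H0 V) \<and> x = (\<Sum>v\<in>F. transport v v id (g v))"
    using x sum_transport_direct_sum[OF x] unfolding direct_sum_def
    by (intro exI[of _ "{v. x v \<noteq> 0}"] exI[of _ "\<lambda>_. x"]) auto
qed (auto simp: transport_def fun_eq_iff)

lemma mem_component_direct_sum_iff:
  assumes v: "v \<in> H0"
  shows "x \<in> transport v v id ` direct_sum H0 V \<longleftrightarrow> x v \<in> V v \<and> (\<forall>w. w \<noteq> v \<longrightarrow> x w = 0)"
proof
  assume "x \<in> transport v v id ` direct_sum H0 V"
  then obtain z where z: "z \<in> direct_sum H0 V" and x: "x = transport v v id z"
    by blast
  have "z v \<in> V v"
    using z v unfolding direct_sum_def by blast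
  then show "x v \<in> V v \<and> (\<forall>w. w \<noteq> v \<longrightarrow> x w = 0)"
    unfolding x transport_def by simp
next
  assume x: "x v \<in> V v \<and> (\<forall>w. w \<noteq> v \<longrightarrow> x w = 0)"
  then have "x = (\<lambda>w. if w = v then x v else 0)"
    by (auto simp: fun_eq_iff)
  with single_mem_direct_sum[OF v] x have "x \<in> direct_sum H0 V"
    by metis
  moreover have "transport v v id x = x"
    using x by (auto simp: transport_def fun_eq_iff)
  ultimately show "x \<in> transport v v id ` direct_sum H0 V"
    by (metis image_eqI)
qed

lemma single_mem_component:
  "v \<in> H0 \<Longrightarrow> y \<in> V v \<Longrightarrow> (\<lambda>w. if w = v then y else 0) \<in> transport v v id ` direct_sum H0 V"
  by (simp add: mem_component_direct_sum_iff)

lemma reps_isomorphic_direct_sum: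
  "reps_isomorphic (\<lambda>c x w. sc c (x w)) sc H0 H1 I J s r
     (\<lambda>v. transport v v id ` direct_sum H0 V) (\<lambda>h i j. transport (s h i) (r h j) (R h i j)) V R"
  unfolding reps_isomorphic_def
proof (intro exI conjI)
  let ?\<phi> = "\<lambda>v (x :: 'v \<Rightarrow> 'b). x v" and ?\<psi> = "\<lambda>v y w. if w = v then y else (0 :: 'b)"
  show "rep_morph (\<lambda>c x w. sc c (x w)) sc H0 H1 I J s r (\<lambda>v. transport v v id ` direct_sum H0 V)
      (\<lambda>h i j. transport (s h i) (r h j) (R h i j)) V R ?\<phi>"
    unfolding rep_morph_def lin_on_def
    by (auto simp: mem_component_direct_sum_iff transport_def direct_sum_apply)
  show "rep_morph sc (\<lambda>c x w. sc c (x w)) H0 H1 I J s r V R (\<lambda>v. transport v v id ` direct_sum H0 V)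
      (\<lambda>h i j. transport (s h i) (r h j) (R h i j)) ?\<psi>"
    unfolding rep_morph_def
  proof (intro conjI ballI)
    fix v assume v: "v \<in> H0"
    show "lin_on sc (\<lambda>c x w. sc c (x w)) (V v) (transport v v id ` direct_sum H0 V) (?\<psi> v)"
      unfolding lin_on_def using single_mem_component[OF v] by (auto simp: fun_eq_iff scale_zero)
  qed (simp add: transport_def fun_eq_iff)
  show "\<forall>v\<in>H0. (\<forall>x\<in>transport v v id ` direct_sum H0 V. ?\<psi> v (?\<phi> v x) = x) \<and> (\<forall>y\<in>V v. ?\<phi> v (?\<psi> v y) = y)"
    by (auto simp: mem_component_direct_sum_iff fun_eq_iff transport_def)
qed

end

lemma quiver_rep_condH_realized:
  fixes sc :: "'k::field \<Rightarrow> 'b::ab_group_add \<Rightarrow> 'b" and H0 :: "'v set"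
  assumes regular: "regular_hypergraph H0 H1 I J s r"
    and rep: "quiver_rep sc H0 H1 I J s r V R" and H: "condH H1 I J s r V R"
  shows "\<exists>M P A As. unital_module (\<lambda>c (x :: 'v \<Rightarrow> 'b) w. sc c (x w)) H0 H1 I J s r M P A As \<and>
           reps_isomorphic (\<lambda>c (x :: 'v \<Rightarrow> 'b) w. sc c (x w)) sc H0 H1 I J s r (\<lambda>v. P v ` M) A V R"
proof -
  have vs: "Vector_Spaces.vector_space sc" and V: "\<And>v. v \<in> H0 \<Longrightarrow> subsp sc (V v)"
    and lin_R: "\<And>h i j. h \<in> H1 \<Longrightarrow> i \<in> I h \<Longrightarrow> j \<in> J h \<Longrightarrow> lin_on sc sc (V (s h i)) (V (r h j)) (R h i j)"
    using rep unfolding quiver_rep_def by auto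
  have "invertible_matrix sc (I h) (J h) (\<lambda>i. V (s h i)) (\<lambda>j. V (r h j)) (R h)" if h: "h \<in> H1" for h
    using vs lin_R[OF h] H h regular V unfolding invertible_matrix_def condH_iff_bij_matrix_map regular_hypergraph_def
    by blast
  then have inverse: "\<And>h. h \<in> H1 \<Longrightarrow> inverse_matrices sc (I h) (J h) (\<lambda>i. V (s h i)) (\<lambda>j. V (r h j)) (R h)
      (inverse_matrix (I h) (J h) (\<lambda>i. V (s h i)) (R h))"
    by (rule invertible_matrix.inverse_matrices_inverse_matrix)
  have module: "unital_module (\<lambda>c x w. sc c (x w)) H0 H1 I J s r (direct_sum H0 V) (\<lambda>v. transport v v id)
      (\<lambda>h i j. transport (s h i) (r h j) (R h i j))
      (\<lambda>h i j. transport (r h j) (s h i) (inverse_matrix (I h) (J h) (\<lambda>i. V (s h i)) (R h) i j))"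
    by (rule unital_module_direct_sum[OF vs V regular inverse])
  have iso: "reps_isomorphic (\<lambda>c x w. sc c (x w)) sc H0 H1 I J s r
      (\<lambda>v. transport v v id ` direct_sum H0 V) (\<lambda>h i j. transport (s h i) (r h j) (R h i j)) V R"
    by (rule reps_isomorphic_direct_sum[OF vs V])
  show ?thesis
    by (intro exI conjI) (fact module, fact iso)
qed

theorem mainTheorem13:
  fixes H0 :: "'v set" and H1 :: "'h set" and I :: "'h \<Rightarrow> 'i set" and J :: "'h \<Rightarrow> 'j set"
    and s :: "'h \<Rightarrow> 'i \<Rightarrow> 'v" and r :: "'h \<Rightarrow> 'j \<Rightarrow> 'v"
  assumes reg: "regular_hypergraph H0 H1 I J s r"
  shows
    \<comment> \<open>the functor M \<mapsto> rho_M lands in representations satisfying (H)\<close>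
    "(\<forall>(scM :: 'k::field \<Rightarrow> 'm::ab_group_add \<Rightarrow> 'm) M P A As.
        unital_module scM H0 H1 I J s r M P A As \<longrightarrow>
          quiver_rep scM H0 H1 I J s r (\<lambda>v. P v ` M) A \<and>
          condH H1 I J s r (\<lambda>v. P v ` M) A)
   \<and> \<comment> \<open>on morphisms: f \<mapsto> (f restricted to each M v) is a morphism of representations\<close>
     (\<forall>(scM :: 'k \<Rightarrow> 'm \<Rightarrow> 'm) M P A As (scN :: 'k \<Rightarrow> 'n::ab_group_add \<Rightarrow> 'n) N Q B Bs f.
        unital_module scM H0 H1 I J s r M P A As \<longrightarrow>
        unital_module scN H0 H1 I J s r N Q B Bs \<longrightarrow>
        Lmodule_hom scM scN H0 H1 I J M P A As N Q B Bs f \<longrightarrow>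
        rep_morph scM scN H0 H1 I J s r (\<lambda>v. P v ` M) A (\<lambda>v. Q v ` N) B (\<lambda>v. f))
   \<and> \<comment> \<open>faithful\<close>
     (\<forall>(scM :: 'k \<Rightarrow> 'm \<Rightarrow> 'm) M P A As (scN :: 'k \<Rightarrow> 'n \<Rightarrow> 'n) N Q B Bs f g.
        unital_module scM H0 H1 I J s r M P A As \<longrightarrow>
        unital_module scN H0 H1 I J s r N Q B Bs \<longrightarrow>
        Lmodule_hom scM scN H0 H1 I J M P A As N Q B Bs f \<longrightarrow>
        Lmodule_hom scM scN H0 H1 I J M P A As N Q B Bs g \<longrightarrow>
        (\<forall>v\<in>H0. \<forall>x\<in>P v ` M. f x = g x) \<longrightarrow> (\<forall>x\<in>M. f x = g x))
   \<and> \<comment> \<open>full\<close>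
     (\<forall>(scM :: 'k \<Rightarrow> 'm \<Rightarrow> 'm) M P A As (scN :: 'k \<Rightarrow> 'n \<Rightarrow> 'n) N Q B Bs \<phi>.
        unital_module scM H0 H1 I J s r M P A As \<longrightarrow>
        unital_module scN H0 H1 I J s r N Q B Bs \<longrightarrow>
        rep_morph scM scN H0 H1 I J s r (\<lambda>v. P v ` M) A (\<lambda>v. Q v ` N) B \<phi> \<longrightarrow>
        (\<exists>f. Lmodule_hom scM scN H0 H1 I J M P A As N Q B Bs f \<and>
             (\<forall>v\<in>H0. \<forall>x\<in>P v ` M. f x = \<phi> v x)))
   \<and> \<comment> \<open>essentially surjective onto representations satisfying (H)\<close>
     (\<forall>(scV :: 'k \<Rightarrow> 'b::ab_group_add \<Rightarrow> 'b) V R.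
        quiver_rep scV H0 H1 I J s r V R \<longrightarrow> condH H1 I J s r V R \<longrightarrow>
        (\<exists>M P A As.
           unital_module (\<lambda>c (x :: 'v \<Rightarrow> 'b) w. scV c (x w)) H0 H1 I J s r M P A As \<and>
           reps_isomorphic (\<lambda>c (x :: 'v \<Rightarrow> 'b) w. scV c (x w)) scV H0 H1 I J s r
             (\<lambda>v. P v ` M) A V R))"
proof (intro conjI allI impI)
  fix scM :: "'k \<Rightarrow> 'm \<Rightarrow> 'm" and M P A As
  assume "unital_module scM H0 H1 I J s r M P A As"
  then interpret hypergraph_module scM H0 H1 I J s r M P A As
    using reg by unfold_locales
  show "quiver_rep scM H0 H1 I J s r (\<lambda>v. P v ` M) A" "condH H1 I J s r (\<lambda>v. P v ` M) A"
    by (rule quiver_rep_components, rule condH_components)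
next
  fix scM :: "'k \<Rightarrow> 'm \<Rightarrow> 'm" and M P A As and scN :: "'k \<Rightarrow> 'n \<Rightarrow> 'n" and N Q B Bs f
  assume "unital_module scM H0 H1 I J s r M P A As" and "Lmodule_hom scM scN H0 H1 I J M P A As N Q B Bs f"
  then show "rep_morph scM scN H0 H1 I J s r (\<lambda>v. P v ` M) A (\<lambda>v. Q v ` N) B (\<lambda>v. f)"
    using reg by (intro hypergraph_module.rep_morph_Lmodule_hom) unfold_locales
next
  fix scM :: "'k \<Rightarrow> 'm \<Rightarrow> 'm" and M P A As and scN :: "'k \<Rightarrow> 'n \<Rightarrow> 'n" and N Q B Bs f g
  assume "unital_module scM H0 H1 I J s r M P A As"
    and f: "Lmodule_hom scM scN H0 H1 I J M P A As N Q B Bs f"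
    and g: "Lmodule_hom scM scN H0 H1 I J M P A As N Q B Bs g"
    and eq: "\<forall>v\<in>H0. \<forall>x\<in>P v ` M. f x = g x"
  then interpret hypergraph_module scM H0 H1 I J s r M P A As
    using reg by unfold_locales
  have "lin_on scM scN M N f" "lin_on scM scN M N g"
    using f g unfolding Lmodule_hom_def by blast+
  with eq show "\<forall>x\<in>M. f x = g x"
    using lin_on_eq_on_components by blast
next
  fix scM :: "'k \<Rightarrow> 'm \<Rightarrow> 'm" and M P A As and scN :: "'k \<Rightarrow> 'n \<Rightarrow> 'n" and N Q B Bs \<phi>
  assume "unital_module scM H0 H1 I J s r M P A As" "unital_module scN H0 H1 I J s r N Q B Bs"
    and "rep_morph scM scN H0 H1 I J s r (\<lambda>v. P v ` M) A (\<lambda>v. Q v ` N) B \<phi>"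
  then interpret module_rep_morph scM scN H0 H1 I J s r M P A As N Q B Bs \<phi>
    using reg by unfold_locales
  show "\<exists>f. Lmodule_hom scM scN H0 H1 I J M P A As N Q B Bs f \<and> (\<forall>v\<in>H0. \<forall>x\<in>P v ` M. f x = \<phi> v x)"
    using Lmodule_hom_extension extension_component by blast
next
  fix scV :: "'k \<Rightarrow> 'b \<Rightarrow> 'b" and V R
  assume "quiver_rep scV H0 H1 I J s r V R" and "condH H1 I J s r V R"
  then show "\<exists>M P A As. unital_module (\<lambda>c (x :: 'v \<Rightarrow> 'b) w. scV c (x w)) H0 H1 I J s r M P A As \<and>
      reps_isomorphic (\<lambda>c (x :: 'v \<Rightarrow> 'b) w. scV c (x w)) scV H0 H1 I J s r (\<lambda>v. P v ` M) A V R"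
    by (rule quiver_rep_condH_realized[OF reg])
qed

end
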